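(* Let $L=\mathcal{F}(P)$ be a finite distributive lattice and let $K=[\hat0_K,\hat1_K]$ be a cutting of $L$. Then $$R(L\boxplus K,x)=R_L({\downarrow K},x)+x\,R_L({\uparrow K},x)=R({\downarrow K},x)+x^{h_L(\hat0_K)+1}R({\uparrow K},x).$$
   Context: For a finite poset $P$, $\mathcal{F}(P)$ is the set of filters (up-sets) of $P$ ordered by reverse inclusion; it is a finite distributive lattice with least element $P$ and greatest element $\emptyset$. A cutting of a finite distributive lattice $L$ is an interval $K=[\hat0_K,\hat1_K]$ of $L$ such that every maximal chain of $L$ meets $K$. For a cutting $K$ of $L=\mathcal{F}(P)$, let $S=\hat0_K\setminus\hat1_K$, $S_0$ the set of maximal elements of $P\setminus\hat0_K$, $S_1$ the set of minimal elements of $\hat1_K$. The poset $P_K$ is $P\cup\{x_K\}$ ($x_K$ new) where the order on $P$ is unchanged, $z<x_K$ iff $z\le s$ for some $s\in S_0$, $x_K<y$ iff $y\ge s$ for some $s\in S_1$, and $x_K$ is incomparable to every element of $S$. The convex expansion is $L\boxplus K:=\mathcal{F}(P_K)$. For a finite distributive lattice $M$ and $a\in M$, $h_M(a)$ is the height of $a$ (length of any maximal chain from the least element of $M$ to $a$). For $A\subseteq L$, $R_L(A,x)=\sum_{a\in A}x^{h_L(a)}$, and for a lattice $M$, $R(M,x)=R_M(M,x)=\sum_{a\in M}x^{h_M(a)}$ (rank generating function). Here ${\downarrow K}=\{a\in L: a\le\hat1_K\}$ and ${\uparrow K}=\{a\in L:a\ge\hat0_K\}$, regarded as lattices in their own right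 in $R({\downarrow K},x)$, $R({\uparrow K},x)$. *)

theory Defs
  imports Complex_Main
begin

definition partial_order_on_set :: "'a set \<Rightarrow> ('a \<Rightarrow> 'a \<Rightarrow> bool) \<Rightarrow> bool" where
  "partial_order_on_set Q le \<longleftrightarrow>
     (\<forall>x\<in>Q. le x x) \<and>
     (\<forall>x\<in>Q. \<forall>y\<in>Q. le x y \<and> le y x \<longrightarrow> x = y) \<and>
     (\<forall>x\<in>Q. \<forall>y\<in>Q. \<forall>z\<in>Q. le x y \<and> le y z \<longrightarrow> le x z)"

definition filters :: "'a set \<Rightarrow> ('a \<Rightarrow> 'a \<Rightarrow> bool) \<Rightarrow> 'a set set" where
  "filters Q le = {F. F \<subseteq> Q \<and> (\<forall>x\<in>F. \<forall>y\<in>Q. le x y \<longrightarrow> y \<in> F)}"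

definition filt_le :: "'a set \<Rightarrow> 'a set \<Rightarrow> bool" where
  "filt_le F G \<longleftrightarrow> G \<subseteq> F"

definition is_chain :: "'b set \<Rightarrow> ('b \<Rightarrow> 'b \<Rightarrow> bool) \<Rightarrow> 'b set \<Rightarrow> bool" where
  "is_chain M le C \<longleftrightarrow> C \<subseteq> M \<and> (\<forall>x\<in>C. \<forall>y\<in>C. le x y \<or> le y x)"

definition is_maximal_chain :: "'b set \<Rightarrow> ('b \<Rightarrow> 'b \<Rightarrow> bool) \<Rightarrow> 'b set \<Rightarrow> bool" where
  "is_maximal_chain M le C \<longleftrightarrow> is_chain M le C \<and> (\<forall>D. is_chain M le D \<and> C \<subseteq> D \<longrightarrow> D = C)"

definition height :: "'b set \<Rightarrow> ('b \<Rightarrow> 'b \<Rightarrow> bool) \<Rightarrow> 'b \<Rightarrow> nat" where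
  "height M le a = Max {card C | C. is_chain M le C \<and> (\<forall>c\<in>C. le c a)} - 1"

text \<open>R_M(A,x) = sum over a in A of x^(h_M(a)); R(M,x) = R_M(M,x).\<close>
definition rank_sum :: "'b set \<Rightarrow> ('b \<Rightarrow> 'b \<Rightarrow> bool) \<Rightarrow> 'b set \<Rightarrow> real \<Rightarrow> real" where
  "rank_sum M le A x = (\<Sum>a\<in>A. x ^ height M le a)"

definition rank_gen :: "'b set \<Rightarrow> ('b \<Rightarrow> 'b \<Rightarrow> bool) \<Rightarrow> real \<Rightarrow> real" where
  "rank_gen M le x = rank_sum M le M x"

definition interval_L :: "'a set set \<Rightarrow> 'a set \<Rightarrow> 'a set \<Rightarrow> 'a set set" where
  "interval_L L a0 a1 = {c\<in>L. filt_le a0 c \<and> filt_le c a1}"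

definition is_cutting :: "'a set set \<Rightarrow> 'a set \<Rightarrow> 'a set \<Rightarrow> bool" where
  "is_cutting L a0 a1 \<longleftrightarrow> a0 \<in> L \<and> a1 \<in> L \<and> filt_le a0 a1 \<and>
     (\<forall>C. is_maximal_chain L filt_le C \<longrightarrow> C \<inter> interval_L L a0 a1 \<noteq> {})"

text \<open>The poset P_K on the carrier P plus a new point x_K, encoded via option:
  Some p for p in P, None for x_K.\<close>
definition S0 :: "'a set \<Rightarrow> ('a \<Rightarrow> 'a \<Rightarrow> bool) \<Rightarrow> 'a set \<Rightarrow> 'a set" where
  "S0 P le a0 = {s\<in>P - a0. \<forall>t\<in>P - a0. le s t \<longrightarrow> t = s}"

definition S1 :: "'a set \<Rightarrow> ('a \<Rightarrow> 'a \<Rightarrow> bool) \<Rightarrow> 'a set \<Rightarrow> 'a set" where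
  "S1 P le a1 = {s\<in>a1. \<forall>t\<in>a1. le t s \<longrightarrow> t = s}"

definition PK_carrier :: "'a set \<Rightarrow> 'a option set" where
  "PK_carrier P = Some ` P \<union> {None}"

fun PK_le :: "'a set \<Rightarrow> ('a \<Rightarrow> 'a \<Rightarrow> bool) \<Rightarrow> 'a set \<Rightarrow> 'a set \<Rightarrow> 'a option \<Rightarrow> 'a option \<Rightarrow> bool" where
  "PK_le P le a0 a1 (Some u) (Some v) = le u v"
| "PK_le P le a0 a1 None None = True"
| "PK_le P le a0 a1 (Some z) None = (\<exists>s\<in>S0 P le a0. le z s)"
| "PK_le P le a0 a1 None (Some y) = (\<exists>s\<in>S1 P le a1. le s y)"

definition convex_expansion :: "'a set \<Rightarrow> ('a \<Rightarrow> 'a \<Rightarrow> bool) \<Rightarrow> 'a set \<Rightarrow> 'a set \<Rightarrow> 'a option set set" where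
  "convex_expansion P le a0 a1 = filters (PK_carrier P) (PK_le P le a0 a1)"

definition down_K :: "'a set set \<Rightarrow> 'a set \<Rightarrow> 'a set set" where
  "down_K L a1 = {a\<in>L. filt_le a a1}"

definition up_K :: "'a set set \<Rightarrow> 'a set \<Rightarrow> 'a set set" where
  "up_K L a0 = {a\<in>L. filt_le a0 a}"

end

theory Submission
  imports Defs
begin

(* The filters of P_K containing x_K are x_K added to a filter of P containing \<hat>1_K,
   and those avoiding x_K are exactly the filters of P contained in \<hat>0_K.
   All lattices involved are families of subsets of a finite set Q, ordered by reverse inclusion,
   in which every member other than Q grows to Q one element at a time; in such a family the
   height of G is |Q - G|.  Adjoining x_K shifts the heights of the second kind by one, and
   the rank generating functions follow by reindexing the sums.  The cutting property is only
   needed to make P_K a poset; the count uses no more than \<hat>0_K \<le> \<hat>1_K. *)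

lemma partial_order_on_set_dual:
  "partial_order_on_set P le \<Longrightarrow> partial_order_on_set P (\<lambda>x y. le y x)"
  unfolding partial_order_on_set_def by blast

lemma partial_order_on_set_ex_maximal_above:
  assumes po: "partial_order_on_set P le" and "finite D" "D \<subseteq> P" "z \<in> D"
  shows "\<exists>s\<in>D. le z s \<and> (\<forall>t\<in>D. le s t \<longrightarrow> t = s)"
proof -
  let ?R = "\<lambda>u v. le u v \<and> u \<noteq> v"
  have trans: "le u w" if "u \<in> D" "v \<in> D" "w \<in> D" "le u v" "le v w" for u v w
    using po that \<open>D \<subseteq> P\<close> unfolding partial_order_on_set_def by blast
  have antisym: "u = v" if "u \<in> D" "v \<in> D" "le u v" "le v u" for u v
    using po that \<open>D \<subseteq> P\<close> unfolding partial_order_on_set_def by blast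
  have "asymp_on D ?R"
    using antisym by (auto intro: asymp_onI)
  moreover have "transp_on D ?R"
    using trans antisym by (intro transp_onI) metis
  moreover have "le z z"
    using po \<open>D \<subseteq> P\<close> \<open>z \<in> D\<close> unfolding partial_order_on_set_def by blast
  ultimately obtain s where s: "s \<in> D" "le z s" "\<forall>t\<in>D. ?R s t \<longrightarrow> \<not> le z t"
    using Finite_Set.bex_max_element_with_property[of D ?R "le z"] \<open>finite D\<close> \<open>z \<in> D\<close>
    by blast
  then show ?thesis
    using trans \<open>z \<in> D\<close> by blast
qed

lemma partial_order_on_set_ex_minimal_below:
  assumes "partial_order_on_set P le" and "finite D" "D \<subseteq> P" "z \<in> D"
  shows "\<exists>s\<in>D. le s z \<and> (\<forall>t\<in>D. le t s \<longrightarrow> t = s)"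
  using partial_order_on_set_ex_maximal_above[OF partial_order_on_set_dual[OF assms(1)] assms(2-4)]
  by blast

lemma S0_above:
  assumes "partial_order_on_set P le" and "finite P" and "z \<in> P - a0"
  shows "\<exists>s\<in>S0 P le a0. le z s"
  using partial_order_on_set_ex_maximal_above[of P le "P - a0" z] assms
  unfolding S0_def by auto

lemma S1_below:
  assumes "partial_order_on_set P le" and "finite P" and "a1 \<subseteq> P" and "y \<in> a1"
  shows "\<exists>s\<in>S1 P le a1. le s y"
  using partial_order_on_set_ex_minimal_below[of P le a1 y] assms finite_subset
  unfolding S1_def by blast

definition graded_family :: "'a set \<Rightarrow> 'a set set \<Rightarrow> bool" where
  "graded_family Q M \<longleftrightarrow> finite Q \<and> M \<subseteq> Pow Q \<and> Q \<in> M \<and>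
     (\<forall>G\<in>M. G \<noteq> Q \<longrightarrow> (\<exists>p\<in>Q - G. insert p G \<in> M))"

lemma card_chain_le:
  assumes "finite Q" and "M \<subseteq> Pow Q" and "is_chain M filt_le C"
    and below: "\<forall>c\<in>C. filt_le c G" and "G \<subseteq> Q"
  shows "card C \<le> card (Q - G) + 1"
proof -
  have CQ: "c \<subseteq> Q" if "c \<in> C" for c
    using that assms(2,3) unfolding is_chain_def by auto
  have "inj_on card C"
  proof (rule inj_onI)
    fix c d assume cd: "c \<in> C" "d \<in> C" "card c = card d"
    then have "c \<subseteq> d \<or> d \<subseteq> c"
      using assms(3) unfolding is_chain_def filt_le_def by blast
    with cd show "c = d"
      using CQ \<open>finite Q\<close> card_subset_eq finite_subset by metis
  qed
  moreover have "card G \<le> card c \<and> card c \<le> card Q" if "c \<in> C" for c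
    using below CQ[OF that] that \<open>finite Q\<close> unfolding filt_le_def
    by (meson card_mono finite_subset)
  then have "card ` C \<subseteq> {card G..card Q}"
    by auto
  ultimately have "card C \<le> card {card G..card Q}"
    by (metis card_image card_mono finite_atLeastAtMost)
  then show ?thesis
    using \<open>finite Q\<close> \<open>G \<subseteq> Q\<close> by (simp add: card_Diff_subset finite_subset)
qed

lemma graded_family_ex_chain:
  assumes "graded_family Q M" and "G \<in> M"
  shows "\<exists>C. is_chain M filt_le C \<and> (\<forall>c\<in>C. filt_le c G) \<and> card C = card (Q - G) + 1"
  using \<open>G \<in> M\<close>
proof (induction "card (Q - G)" arbitrary: G)
  case 0
  then have "G = Q"
    using assms unfolding graded_family_def by auto
  then show ?case
    using 0 by (intro exI[of _ "{G}"]) (auto simp: is_chain_def filt_le_def)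
next
  case (Suc n)
  then obtain p where p: "p \<in> Q - G" "insert p G \<in> M"
    using assms unfolding graded_family_def by fastforce
  have "Q - insert p G = (Q - G) - {p}"
    by auto
  then have "card (Q - insert p G) = n"
    using p Suc.hyps(2) assms unfolding graded_family_def by simp
  then obtain C where C: "is_chain M filt_le C" "\<forall>c\<in>C. filt_le c (insert p G)"
    "card C = n + 1"
    using Suc.hyps(1) p(2) by metis
  have "G \<notin> C"
    using C(2) p unfolding filt_le_def by auto
  moreover have "finite C"
    using C(1) assms unfolding is_chain_def graded_family_def
    by (meson finite_Pow_iff finite_subset)
  ultimately show ?case
    using C Suc.prems Suc.hyps(2)
    by (intro exI[of _ "insert G C"]) (auto simp: is_chain_def filt_le_def)
qed

lemma height_graded_family:
  assumes "graded_family Q M" and "G \<in> M"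
  shows "height M filt_le G = card (Q - G)"
proof -
  let ?S = "{card C | C. is_chain M filt_le C \<and> (\<forall>c\<in>C. filt_le c G)}"
  have "finite Q" "M \<subseteq> Pow Q" "G \<subseteq> Q"
    using assms unfolding graded_family_def by auto
  then have bound: "n \<le> card (Q - G) + 1" if "n \<in> ?S" for n
    using that card_chain_le[of Q M _ G] by blast
  then have "finite ?S"
    by (meson atMost_iff finite_atMost finite_subset subsetI)
  moreover obtain C where "is_chain M filt_le C" "\<forall>c\<in>C. filt_le c G" "card C = card (Q - G) + 1"
    using graded_family_ex_chain[OF assms] by blast
  then have "card (Q - G) + 1 \<in> ?S"
    by force
  ultimately have "Max ?S = card (Q - G) + 1"
    using bound by (intro Max_eqI) auto
  then show ?thesis
    unfolding height_def by simp
qed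

lemma rank_sum_graded_family:
  assumes "graded_family Q M" and "A \<subseteq> M"
  shows "rank_sum M filt_le A x = (\<Sum>G\<in>A. x ^ card (Q - G))"
  unfolding rank_sum_def
proof (rule sum.cong)
  fix G assume "G \<in> A"
  with assms show "x ^ height M filt_le G = x ^ card (Q - G)"
    using height_graded_family by (metis subsetD)
qed simp

lemma filters_insert_between:
  assumes "partial_order_on_set P le" and "finite P"
    and "F \<in> filters P le" and "F' \<in> filters P le" and "F \<subset> F'"
  shows "\<exists>p\<in>F' - F. insert p F \<in> filters P le"
proof -
  have "F' \<subseteq> P"
    using assms(4) unfolding filters_def by auto
  moreover obtain z where "z \<in> F' - F"
    using \<open>F \<subset> F'\<close> by blast
  ultimately obtain p where p: "p \<in> F' - F" "\<forall>q\<in>F' - F. le p q \<longrightarrow> q = p"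
    using partial_order_on_set_ex_maximal_above[OF assms(1), of "F' - F" z]
      finite_subset[OF _ \<open>finite P\<close>] by blast
  then have "insert p F \<in> filters P le"
    using assms(3,4) \<open>F' \<subseteq> P\<close> unfolding filters_def by blast
  with p show ?thesis
    by blast
qed

lemma graded_family_filters:
  assumes "partial_order_on_set P le" and "finite P"
  shows "graded_family P (filters P le)"
proof -
  have "P \<in> filters P le"
    unfolding filters_def by auto
  moreover have "filters P le \<subseteq> Pow P"
    unfolding filters_def by auto
  ultimately show ?thesis
    using filters_insert_between[OF assms _ \<open>P \<in> filters P le\<close>] assms(2)
    unfolding graded_family_def by blast
qed

lemma graded_family_down_K:
  assumes "graded_family Q M" and "a \<in> M"
  shows "graded_family Q (down_K M a)"
proof -
  have "a \<subseteq> Q"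
    using assms unfolding graded_family_def by auto
  moreover have "\<exists>p\<in>Q - G. insert p G \<in> down_K M a" if "G \<in> down_K M a" "G \<noteq> Q" for G
    using assms(1) that unfolding graded_family_def down_K_def filt_le_def by blast
  ultimately show ?thesis
    using assms(1) unfolding graded_family_def down_K_def filt_le_def by auto
qed

lemma graded_family_up_K:
  assumes "partial_order_on_set P le" and "finite P" and "a \<in> filters P le"
  shows "graded_family a (up_K (filters P le) a)"
proof -
  have "a \<subseteq> P"
    using assms(3) unfolding filters_def by auto
  moreover have "\<exists>p\<in>a - G. insert p G \<in> up_K (filters P le) a"
    if "G \<in> up_K (filters P le) a" "G \<noteq> a" for G
    using that filters_insert_between[OF assms(1,2) _ assms(3), of G]
    unfolding up_K_def filt_le_def by blast
  ultimately show ?thesis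
    using assms(2,3) finite_subset unfolding graded_family_def up_K_def filt_le_def by auto
qed

definition stacked_family :: "'a set set \<Rightarrow> 'a set set \<Rightarrow> 'a option set set" where
  "stacked_family D U = (\<lambda>F. insert None (Some ` F)) ` D \<union> (\<lambda>F. Some ` F) ` U"

lemma graded_family_stacked_family:
  assumes D: "graded_family Q D" and U: "graded_family A U" and "A \<in> D"
  shows "graded_family (insert None (Some ` Q)) (stacked_family D U)"
proof -
  let ?N = "\<lambda>F. insert None (Some ` F)" and ?S = "\<lambda>F. Some ` F"
  have "finite Q" "D \<subseteq> Pow Q" "Q \<in> D"
    and extD: "\<And>F. F \<in> D \<Longrightarrow> F \<noteq> Q \<Longrightarrow> \<exists>p\<in>Q - F. insert p F \<in> D"
    using D unfolding graded_family_def by auto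
  have "U \<subseteq> Pow A"
    and extU: "\<And>F. F \<in> U \<Longrightarrow> F \<noteq> A \<Longrightarrow> \<exists>p\<in>A - F. insert p F \<in> U"
    using U unfolding graded_family_def by auto
  have "A \<subseteq> Q"
    using \<open>A \<in> D\<close> \<open>D \<subseteq> Pow Q\<close> by auto
  have ext: "\<exists>q\<in>?N Q - G. insert q G \<in> stacked_family D U"
    if G: "G \<in> stacked_family D U" "G \<noteq> ?N Q" for G
  proof (cases "G \<in> ?N ` D")
    case True
    then obtain F where F: "F \<in> D" "G = ?N F"
      by blast
    with G(2) obtain p where p: "p \<in> Q - F" "insert p F \<in> D"
      using extD by blast
    have "insert (Some p) G = ?N (insert p F)"
      using F(2) by auto
    then have "insert (Some p) G \<in> stacked_family D U"
      using p(2) unfolding stacked_family_def by blast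
    moreover have "Some p \<in> ?N Q - G"
      using p F(2) by auto
    ultimately show ?thesis
      by blast
  next
    case False
    then obtain F where F: "F \<in> U" "G = ?S F"
      using G(1) unfolding stacked_family_def by blast
    show ?thesis
    proof (cases "F = A")
      case True
      then have "insert None G \<in> stacked_family D U"
        using F(2) \<open>A \<in> D\<close> unfolding stacked_family_def by blast
      moreover have "None \<in> ?N Q - G"
        using F(2) by auto
      ultimately show ?thesis
        by blast
    next
      case False
      with F(1) obtain p where p: "p \<in> A - F" "insert p F \<in> U"
        using extU by blast
      have "insert (Some p) G = ?S (insert p F)"
        using F(2) by auto
      then have "insert (Some p) G \<in> stacked_family D U"
        using p(2) unfolding stacked_family_def by blast
      moreover have "Some p \<in> ?N Q - G"
        using p F(2) \<open>A \<subseteq> Q\<close> by auto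
      ultimately show ?thesis
        by blast
    qed
  qed
  have "stacked_family D U \<subseteq> Pow (?N Q)"
    using \<open>D \<subseteq> Pow Q\<close> \<open>U \<subseteq> Pow A\<close> \<open>A \<subseteq> Q\<close> unfolding stacked_family_def by blast
  moreover have "?N Q \<in> stacked_family D U"
    using \<open>Q \<in> D\<close> unfolding stacked_family_def by blast
  ultimately show ?thesis
    using ext \<open>finite Q\<close> unfolding graded_family_def by blast
qed

lemma rank_gen_stacked_family:
  assumes D: "graded_family Q D" and U: "graded_family A U" and "A \<in> D"
  shows "rank_gen (stacked_family D U) filt_le x
           = (\<Sum>F\<in>D. x ^ card (Q - F)) + x * (\<Sum>F\<in>U. x ^ card (Q - F))"
proof -
  let ?Q = "insert None (Some ` Q)"
  have "finite Q" "D \<subseteq> Pow Q" "U \<subseteq> Pow Q"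
    using assms unfolding graded_family_def by auto
  then have "finite D" "finite U"
    by (auto intro: finite_subset)
  have card_None: "card (Some ` Q - Some ` F) = card (Q - F)" for F
    by (simp add: image_set_diff[symmetric] card_image)
  have card_Some: "card (?Q - Some ` F) = card (Q - F) + 1" if "F \<subseteq> Q" for F
  proof -
    have "?Q - Some ` F = insert None (Some ` (Q - F))"
      by auto
    then show ?thesis
      using \<open>finite Q\<close> by (simp add: card_image)
  qed
  have sum_D: "(\<Sum>G\<in>(\<lambda>F. insert None (Some ` F)) ` D. x ^ card (?Q - G))
      = (\<Sum>F\<in>D. x ^ card (Q - F))"
    by (subst sum.reindex) (auto simp: inj_on_def inj_image_eq_iff card_None)
  have sum_U: "(\<Sum>G\<in>(\<lambda>F. Some ` F) ` U. x ^ card (?Q - G)) = x * (\<Sum>F\<in>U. x ^ card (Q - F))"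
    using \<open>U \<subseteq> Pow Q\<close> card_Some
    by (subst sum.reindex) (auto simp: inj_on_def inj_image_eq_iff sum_distrib_left intro!: sum.cong)
  have "rank_gen (stacked_family D U) filt_le x = (\<Sum>G\<in>stacked_family D U. x ^ card (?Q - G))"
    unfolding rank_gen_def
    by (rule rank_sum_graded_family[OF graded_family_stacked_family[OF assms] subset_refl])
  also have "\<dots> = (\<Sum>G\<in>(\<lambda>F. insert None (Some ` F)) ` D. x ^ card (?Q - G))
                  + (\<Sum>G\<in>(\<lambda>F. Some ` F) ` U. x ^ card (?Q - G))"
    unfolding stacked_family_def using \<open>finite D\<close> \<open>finite U\<close>
    by (intro sum.union_disjoint) auto
  finally show ?thesis
    unfolding sum_D sum_U .
qed

lemma rank_sum_up_K:
  assumes M: "graded_family Q M" and "a \<in> M" and U: "graded_family a (up_K M a)"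
  shows "rank_sum M filt_le (up_K M a) x = x ^ height M filt_le a * rank_gen (up_K M a) filt_le x"
proof -
  have "finite Q" "a \<subseteq> Q"
    using M \<open>a \<in> M\<close> unfolding graded_family_def by auto
  have card_split: "card (Q - F) = card (Q - a) + card (a - F)" if "F \<in> up_K M a" for F
  proof -
    have "Q - F = (Q - a) \<union> (a - F)" "(Q - a) \<inter> (a - F) = {}"
      using that \<open>a \<subseteq> Q\<close> unfolding up_K_def filt_le_def by auto
    then show ?thesis
      using \<open>finite Q\<close> \<open>a \<subseteq> Q\<close> by (simp add: card_Un_disjoint finite_subset)
  qed
  have "up_K M a \<subseteq> M"
    unfolding up_K_def by auto
  then have "rank_sum M filt_le (up_K M a) x = (\<Sum>F\<in>up_K M a. x ^ card (Q - a) * x ^ card (a - F))"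
    using rank_sum_graded_family[OF M] card_split by (simp add: power_add)
  also have "\<dots> = x ^ height M filt_le a * rank_gen (up_K M a) filt_le x"
    unfolding rank_gen_def rank_sum_graded_family[OF U subset_refl]
      height_graded_family[OF M \<open>a \<in> M\<close>]
    by (simp add: sum_distrib_left)
  finally show ?thesis .
qed

lemma Some_image_mem_convex_expansion_iff:
  assumes po: "partial_order_on_set P le" and "finite P"
    and a0: "a0 \<in> filters P le" and "F \<subseteq> P"
  shows "Some ` F \<in> convex_expansion P le a0 a1 \<longleftrightarrow> F \<in> up_K (filters P le) a0"
proof
  assume E: "Some ` F \<in> convex_expansion P le a0 a1"
  then have "F \<in> filters P le"
    using \<open>F \<subseteq> P\<close> unfolding convex_expansion_def filters_def PK_carrier_def by fastforce
  moreover have "F \<subseteq> a0"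
  proof
    fix z assume "z \<in> F"
    show "z \<in> a0"
    proof (rule ccontr)
      assume "z \<notin> a0"
      then have "PK_le P le a0 a1 (Some z) None"
        using S0_above[OF po \<open>finite P\<close>] \<open>z \<in> F\<close> \<open>F \<subseteq> P\<close> by auto
      then show False
        using E \<open>z \<in> F\<close> unfolding convex_expansion_def filters_def PK_carrier_def by blast
    qed
  qed
  ultimately show "F \<in> up_K (filters P le) a0"
    unfolding up_K_def filt_le_def by blast
next
  assume "F \<in> up_K (filters P le) a0"
  then have F: "F \<in> filters P le" "F \<subseteq> a0"
    unfolding up_K_def filt_le_def by auto
  \<comment> \<open>\<hat>0_K is a filter, so nothing in it lies below an element of S0 \<subseteq> P - \<hat>0_K\<close>
  have "\<not> PK_le P le a0 a1 (Some u) None" if "u \<in> F" for u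
    using that F a0 unfolding filters_def by (auto simp: S0_def)
  with F show "Some ` F \<in> convex_expansion P le a0 a1"
    unfolding convex_expansion_def filters_def PK_carrier_def
    by (auto elim!: PK_le.elims)
qed

lemma insert_None_mem_convex_expansion_iff:
  assumes po: "partial_order_on_set P le" and "finite P"
    and a1: "a1 \<in> filters P le" and "F \<subseteq> P"
  shows "insert None (Some ` F) \<in> convex_expansion P le a0 a1 \<longleftrightarrow> F \<in> down_K (filters P le) a1"
proof
  assume E: "insert None (Some ` F) \<in> convex_expansion P le a0 a1"
  then have "F \<in> filters P le"
    using \<open>F \<subseteq> P\<close> unfolding convex_expansion_def filters_def PK_carrier_def by fastforce
  moreover have "a1 \<subseteq> F"
  proof
    fix y assume "y \<in> a1"
    moreover have "a1 \<subseteq> P"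
      using a1 unfolding filters_def by auto
    ultimately have "PK_le P le a0 a1 None (Some y)"
      using S1_below[OF po \<open>finite P\<close>] by auto
    then show "y \<in> F"
      using E \<open>y \<in> a1\<close> \<open>a1 \<subseteq> P\<close>
      unfolding convex_expansion_def filters_def PK_carrier_def by blast
  qed
  ultimately show "F \<in> down_K (filters P le) a1"
    unfolding down_K_def filt_le_def by blast
next
  assume "F \<in> down_K (filters P le) a1"
  then have F: "F \<in> filters P le" "a1 \<subseteq> F"
    unfolding down_K_def filt_le_def by auto
  have "y \<in> F" if "PK_le P le a0 a1 None (Some y)" "y \<in> P" for y
    using that F a1 unfolding filters_def by (auto simp: S1_def)
  with F show "insert None (Some ` F) \<in> convex_expansion P le a0 a1"
    unfolding convex_expansion_def filters_def PK_carrier_def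
    by (auto elim!: PK_le.elims)
qed

lemma convex_expansion_eq_stacked_family:
  assumes po: "partial_order_on_set P le" and "finite P"
    and a0: "a0 \<in> filters P le" and a1: "a1 \<in> filters P le"
  shows "convex_expansion P le a0 a1
           = stacked_family (down_K (filters P le) a1) (up_K (filters P le) a0)"
    (is "?E = stacked_family ?D ?U")
proof
  note Some_iff = Some_image_mem_convex_expansion_iff[of P le a0 _ a1, OF po \<open>finite P\<close> a0]
    and None_iff = insert_None_mem_convex_expansion_iff[of P le a1 _ a0, OF po \<open>finite P\<close> a1]
  show "?E \<subseteq> stacked_family ?D ?U"
  proof
    fix G assume "G \<in> ?E"
    define F where "F = Some -` G"
    have "G \<subseteq> PK_carrier P"
      using \<open>G \<in> ?E\<close> unfolding convex_expansion_def filters_def by auto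
    then have "F \<subseteq> P"
      unfolding F_def PK_carrier_def by auto
    show "G \<in> stacked_family ?D ?U"
    proof (cases "None \<in> G")
      case True
      then have "G = insert None (Some ` F)"
        unfolding F_def by (auto intro: option.exhaust)
      with \<open>G \<in> ?E\<close> have "F \<in> ?D"
        using None_iff[OF \<open>F \<subseteq> P\<close>] by simp
      with \<open>G = insert None (Some ` F)\<close> show ?thesis
        unfolding stacked_family_def by blast
    next
      case False
      then have "G = Some ` F"
        unfolding F_def by (auto simp: image_iff) (metis not_None_eq)
      with \<open>G \<in> ?E\<close> have "F \<in> ?U"
        using Some_iff[OF \<open>F \<subseteq> P\<close>] by simp
      with \<open>G = Some ` F\<close> show ?thesis
        unfolding stacked_family_def by blast
    qed
  qed
  have "?D \<subseteq> Pow P" "?U \<subseteq> Pow P"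
    unfolding down_K_def up_K_def filters_def by auto
  then show "stacked_family ?D ?U \<subseteq> ?E"
    using Some_iff None_iff unfolding stacked_family_def by auto
qed

theorem proposition1:
  fixes P :: "'a set" and le :: "'a \<Rightarrow> 'a \<Rightarrow> bool" and a0 a1 :: "'a set" and x :: real
  assumes "finite P"
    and "partial_order_on_set P le"
    and "is_cutting (filters P le) a0 a1"
  shows "rank_gen (convex_expansion P le a0 a1) filt_le x
           = rank_sum (filters P le) filt_le (down_K (filters P le) a1) x
             + x * rank_sum (filters P le) filt_le (up_K (filters P le) a0) x
       \<and> rank_sum (filters P le) filt_le (down_K (filters P le) a1) x
             + x * rank_sum (filters P le) filt_le (up_K (filters P le) a0) x
           = rank_gen (down_K (filters P le) a1) filt_le x
             + x ^ (height (filters P le) filt_le a0 + 1) * rank_gen (up_K (filters P le) a0) filt_le x"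
proof -
  define L where "L = filters P le"
  have a0: "a0 \<in> L" and a1: "a1 \<in> L" and "a1 \<subseteq> a0"
    using assms(3) unfolding is_cutting_def L_def filt_le_def by auto
  have L: "graded_family P L"
    unfolding L_def by (rule graded_family_filters[OF assms(2,1)])
  have D: "graded_family P (down_K L a1)"
    by (rule graded_family_down_K[OF L a1])
  have U: "graded_family a0 (up_K L a0)"
    using graded_family_up_K[OF assms(2,1)] a0 unfolding L_def by blast
  have "a0 \<in> down_K L a1"
    using a0 \<open>a1 \<subseteq> a0\<close> unfolding down_K_def filt_le_def by auto
  have "down_K L a1 \<subseteq> L" "up_K L a0 \<subseteq> L"
    unfolding down_K_def up_K_def by auto
  note sum_D = rank_sum_graded_family[OF L \<open>down_K L a1 \<subseteq> L\<close>]
    and sum_U = rank_sum_graded_family[OF L \<open>up_K L a0 \<subseteq> L\<close>]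
  have "convex_expansion P le a0 a1 = stacked_family (down_K L a1) (up_K L a0)"
    using convex_expansion_eq_stacked_family[OF assms(2,1)] a0 a1 unfolding L_def by blast
  then have "rank_gen (convex_expansion P le a0 a1) filt_le x
      = rank_sum L filt_le (down_K L a1) x + x * rank_sum L filt_le (up_K L a0) x"
    unfolding sum_D sum_U using rank_gen_stacked_family[OF D U \<open>a0 \<in> down_K L a1\<close>] by simp
  moreover have "rank_sum L filt_le (down_K L a1) x = rank_gen (down_K L a1) filt_le x"
    unfolding sum_D rank_gen_def rank_sum_graded_family[OF D subset_refl] ..
  ultimately show ?thesis
    using rank_sum_up_K[OF L a0 U] unfolding L_def[symmetric] by (simp add: mult.assoc)
qed

end
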